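(* Let $n\ge1$ be an integer, $x$ an indeterminate, and let $A$ be the $n\times n$ matrix with entries $A_{ij}=(1-x^i)^{n+1-j}(1-x^{i+1})^{n+1-j}x^{i(j-1)}$ for $1\le i,j\le n$. Then $$\det A=(-1)^{\frac{n(n-1)}{2}}x^{\frac{n(n^2-1)}{6}}\prod_{k=1}^{n}(1-x^{2k-1})^{n+1-k}(1-x^{2k})^{n+1-k}.$$ *)

theory Defs
  imports "Jordan_Normal_Form.Determinant" "HOL-Computational_Algebra.Polynomial"
begin

end

theory Submission
  imports Defs
begin

text \<open>
  Put u i = (1 - x^(i+1)) (1 - x^(i+2)) and v i = x^(i+1), rows and columns indexed from 0.
  Entry (i, j) is then u i ^ (n - j) * v i ^ j, so after pulling u i out of row i we are left
  with a homogeneous Vandermonde matrix, whose determinant is the product of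
  u i * v k - u k * v i over i < k.  Each such factor is -x^(i+1) (1 - x^(k-i)) (1 - x^(i+k+3)).
  The monomials give the sign and the power of x, and for each k the factor u k together with
  the products (1 - x^(k-i)) (1 - x^(i+k+3)), i < k, is exactly (1 - x) (1 - x^2) ... (1 - x^(2k+2));
  these q-factorials regroup into the right-hand side.
\<close>

definition hvandermonde_mat :: "nat \<Rightarrow> (nat \<Rightarrow> 'a :: comm_ring_1) \<Rightarrow> (nat \<Rightarrow> 'a) \<Rightarrow> 'a mat" where
  "hvandermonde_mat n u v = mat n n (\<lambda>(i, j). u i ^ (n - 1 - j) * v i ^ j)"

text \<open>
  Multiplying on the right by this matrix replaces column j < n - 1 by a times column j minus
  b times column j + 1; with a = v m and b = u m it clears the last row of
  hvandermonde_mat (Suc m) u v except for its last entry.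
\<close>

definition vandermonde_elim_mat :: "nat \<Rightarrow> 'a :: comm_ring_1 \<Rightarrow> 'a \<Rightarrow> 'a mat" where
  "vandermonde_elim_mat n a b =
     mat n n (\<lambda>(k, j). if k = j then (if Suc j = n then 1 else a) else if k = Suc j then - b else 0)"

lemma hvandermonde_mat_carrier: "hvandermonde_mat n u v \<in> carrier_mat n n"
  by (simp add: hvandermonde_mat_def)

lemma vandermonde_elim_mat_carrier: "vandermonde_elim_mat n a b \<in> carrier_mat n n"
  by (simp add: vandermonde_elim_mat_def)

lemma det_mat_scale_rows:
  "det (mat n n (\<lambda>(i, j). c i * f i j)) = prod c {..<n} * det (mat n n (\<lambda>(i, j). f i j))"
proof -
  have "mat n n (\<lambda>(i, j). c i * f i j) = mat\<^sub>r n n (\<lambda>i. c i \<cdot>\<^sub>v vec n (f i))"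
    by (rule eq_matI) auto
  moreover have "mat n n (\<lambda>(i, j). f i j) = mat\<^sub>r n n (\<lambda>i. vec n (f i))"
    by (rule eq_matI) auto
  ultimately show ?thesis
    using det_rows_mul[of "\<lambda>i. vec n (f i)" n c] by (simp add: atLeast0LessThan)
qed

lemma det_vandermonde_elim_mat: "det (vandermonde_elim_mat (Suc m) a b) = a ^ m"
proof -
  have "diag_mat (vandermonde_elim_mat (Suc m) a b) = replicate m a @ [1]"
    by (rule nth_equalityI) (auto simp: diag_mat_def vandermonde_elim_mat_def nth_append)
  then show ?thesis
    by (subst det_lower_triangular[of "Suc m"]) (auto simp: vandermonde_elim_mat_def)
qed

lemma hvandermonde_mat_mult_elim:
  assumes "i < Suc m" "j < Suc m"
  shows "(hvandermonde_mat (Suc m) u v * vandermonde_elim_mat (Suc m) (v m) (u m)) $$ (i, j)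
    = (if j = m then v i ^ m else (u i * v m - u m * v i) * (u i ^ (m - 1 - j) * v i ^ j))"
proof -
  let ?M = "hvandermonde_mat (Suc m) u v"
  have "(?M * vandermonde_elim_mat (Suc m) (v m) (u m)) $$ (i, j)
      = (\<Sum>k<Suc m. (if k = j then (if j = m then 1 else v m) * ?M $$ (i, j) else 0)
                   + (if k = Suc j then - u m * ?M $$ (i, Suc j) else 0))"
    using assms
    by (auto simp: hvandermonde_mat_def vandermonde_elim_mat_def scalar_prod_def atLeast0LessThan
        intro!: sum.cong)
  also have "\<dots> = (if j = m then ?M $$ (i, j) else v m * ?M $$ (i, j) - u m * ?M $$ (i, Suc j))"
    using assms by (simp add: sum.distrib)
  also have "\<dots> = (if j = m then v i ^ m else (u i * v m - u m * v i) * (u i ^ (m - 1 - j) * v i ^ j))"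
  proof (cases "j = m")
    case False
    then have "m - j = Suc (m - 1 - j)" using assms by simp
    then show ?thesis using False assms by (simp add: hvandermonde_mat_def algebra_simps)
  qed (use assms in \<open>simp add: hvandermonde_mat_def\<close>)
  finally show ?thesis .
qed

lemma det_hvandermonde_mat:
  fixes u v :: "nat \<Rightarrow> 'a :: idom"
  assumes "\<And>k. k < n \<Longrightarrow> v k \<noteq> 0"
  shows "det (hvandermonde_mat n u v) = (\<Prod>k<n. \<Prod>i<k. u i * v k - u k * v i)"
  using assms
proof (induction n)
  case 0
  show ?case by (simp add: hvandermonde_mat_def)
next
  case (Suc m)
  define G where "G = hvandermonde_mat (Suc m) u v * vandermonde_elim_mat (Suc m) (v m) (u m)"
  have G: "G \<in> carrier_mat (Suc m) (Suc m)"
    unfolding G_def by (rule mult_carrier_mat[OF hvandermonde_mat_carrier vandermonde_elim_mat_carrier])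
  have G_entry: "G $$ (i, j)
      = (if j = m then v i ^ m else (u i * v m - u m * v i) * (u i ^ (m - 1 - j) * v i ^ j))"
    if "i < Suc m" "j < Suc m" for i j
    unfolding G_def using that by (rule hvandermonde_mat_mult_elim)
  have "det (hvandermonde_mat (Suc m) u v) * v m ^ m = det G"
    unfolding G_def det_mult[OF hvandermonde_mat_carrier vandermonde_elim_mat_carrier]
    by (simp add: det_vandermonde_elim_mat)
  also have "\<dots> = (\<Sum>j<Suc m. G $$ (m, j) * cofactor G m j)"
    by (rule laplace_expansion_row[OF G]) simp
  also have "\<dots> = v m ^ m * det (mat_delete G m m)"
    by (simp add: G_entry cofactor_def)
  also have "mat_delete G m m = mat m m (\<lambda>(i, j). (u i * v m - u m * v i) * (u i ^ (m - 1 - j) * v i ^ j))"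
    using G by (intro eq_matI) (auto simp: mat_delete_def G_entry)
  also have "det \<dots> = (\<Prod>i<m. u i * v m - u m * v i) * det (hvandermonde_mat m u v)"
    by (simp add: det_mat_scale_rows hvandermonde_mat_def)
  finally show ?case
    using Suc by (simp add: mult.commute)
qed

lemma det_scaled_hvandermonde:
  fixes u v :: "nat \<Rightarrow> 'a :: idom"
  assumes "\<And>k. k < n \<Longrightarrow> v k \<noteq> 0"
  shows "det (mat n n (\<lambda>(i, j). u i ^ (n - j) * v i ^ j))
    = (\<Prod>k<n. u k) * (\<Prod>k<n. \<Prod>i<k. u i * v k - u k * v i)"
proof -
  have "mat n n (\<lambda>(i, j). u i ^ (n - j) * v i ^ j) = mat n n (\<lambda>(i, j). u i * (u i ^ (n - 1 - j) * v i ^ j))"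
    by (intro eq_matI) (auto simp: Suc_diff_Suc simp flip: power_Suc)
  then show ?thesis
    using det_hvandermonde_mat[OF assms] by (simp add: det_mat_scale_rows hvandermonde_mat_def)
qed

lemma prod_triangle_power:
  fixes g :: "nat \<Rightarrow> 'a :: comm_monoid_mult"
  shows "(\<Prod>k<n. \<Prod>j\<le>k. g j) = (\<Prod>j<n. g j ^ (n - j))"
proof (induction n)
  case 0
  show ?case by simp
next
  case (Suc n)
  have "(\<Prod>j<Suc n. g j ^ (Suc n - j)) = (\<Prod>j<Suc n. g j ^ (n - j) * g j)"
    by (intro prod.cong) (auto simp: Suc_diff_le less_Suc_eq_le power_Suc2 simp del: power_Suc)
  also have "\<dots> = (\<Prod>j<n. g j ^ (n - j)) * (\<Prod>j\<le>n. g j)"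
    by (simp add: prod.distrib flip: lessThan_Suc_atMost)
  finally show ?case using Suc by simp
qed

lemma sum_triangle_Suc: "6 * (\<Sum>k<n. \<Sum>i<k. Suc i) = n * (n\<^sup>2 - 1)"
proof (induction n)
  case 0
  show ?case by simp
next
  case (Suc n)
  have "2 * (\<Sum>i<n. Suc i) = n * Suc n"
    by (induction n) simp_all
  with Suc show ?case
    by (cases n) (simp_all add: algebra_simps power2_eq_square)
qed

lemma prod_minus_power_triangle:
  fixes x :: "'a :: comm_ring_1"
  shows "(\<Prod>k<n. \<Prod>i<k. - (x ^ (i + 1))) = (-1) ^ (n * (n - 1) div 2) * x ^ (n * (n\<^sup>2 - 1) div 6)"
proof -
  have "(\<Prod>k<n. \<Prod>i<k. - (x ^ (i + 1))) = (-1) ^ (\<Sum>k<n. \<Sum>i<k. 1) * x ^ (\<Sum>k<n. \<Sum>i<k. i + 1)"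
    unfolding power_sum power_one_right by (simp only: prod.distrib[symmetric] mult_minus1)
  also have "(\<Sum>k<n. \<Sum>i<k. 1::nat) = n * (n - 1) div 2"
    using Sum_Ico_nat[of 0 n] by (simp add: atLeast0LessThan)
  also have "(\<Sum>k<n. \<Sum>i<k. i + 1) = n * (n\<^sup>2 - 1) div 6"
    using sum_triangle_Suc[of n] by simp
  finally show ?thesis .
qed

lemma one_minus_power_cross_diff:
  fixes x :: "'a :: comm_ring_1"
  assumes "i < k"
  shows "(1 - x ^ (i + 1)) * (1 - x ^ (i + 2)) * x ^ (k + 1) - (1 - x ^ (k + 1)) * (1 - x ^ (k + 2)) * x ^ (i + 1)
    = - (x ^ (i + 1)) * ((1 - x ^ (k - i)) * (1 - x ^ (i + k + 3)))"
proof -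
  have "x ^ (k + 1) = x ^ (i + 1) * x ^ (k - i)"
    unfolding power_add[symmetric] using assms by simp
  moreover have "x ^ (i + k + 3) = x ^ (i + 1) * x ^ (k + 1) * x"
    by (simp add: power_add eval_nat_numeral mult_ac)
  moreover have "x ^ (n + 2) = x ^ (n + 1) * x" for n
    by (simp add: mult.commute)
  ultimately show ?thesis
    by (simp only:) (simp add: algebra_simps)
qed

lemma prod_one_minus_power_column:
  fixes x :: "'a :: comm_ring_1"
  shows "(1 - x ^ (k + 1)) * (1 - x ^ (k + 2)) * (\<Prod>i<k. (1 - x ^ (k - i)) * (1 - x ^ (i + k + 3)))
    = (\<Prod>d = 1..2 * k + 2. 1 - x ^ d)"
proof -
  let ?f = "\<lambda>d. 1 - x ^ d"
  have low: "(\<Prod>i<k. ?f (k - i)) = (\<Prod>d = 1..k. ?f d)"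
    by (rule prod.reindex_bij_witness[where i="\<lambda>d. k - d" and j="\<lambda>i. k - i"]) auto
  have high: "(\<Prod>i<k. ?f (i + k + 3)) = (\<Prod>d = k + 2 + 1..k + 2 + k. ?f d)"
    by (rule prod.reindex_bij_witness[where i="\<lambda>d. d - (k + 3)" and j="\<lambda>i. i + k + 3"]) auto
  have "(\<Prod>d = 1..2 * k + 2. ?f d) = (\<Prod>d = 1..k + 2. ?f d) * (\<Prod>d = k + 2 + 1..k + 2 + k. ?f d)"
    using prod.ub_add_nat[of 1 "k + 2" ?f k] by (simp only: mult_2 add_ac)
  also have "(\<Prod>d = 1..k + 2. ?f d) = (\<Prod>d = 1..k. ?f d) * ?f (k + 1) * ?f (k + 2)"
    by (simp add: mult_ac)
  finally show ?thesis
    unfolding prod.distrib low high by (simp only: mult_ac)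
qed

lemma prod_one_minus_power_pairs:
  fixes x :: "'a :: comm_ring_1"
  shows "(\<Prod>j<m. (1 - x ^ (2 * j + 1)) * (1 - x ^ (2 * j + 2))) = (\<Prod>d = 1..2 * m. 1 - x ^ d)"
  by (induction m) (simp_all add: mult_ac)

lemma prod_cross_diff_one_minus_power:
  fixes x :: "'a :: comm_ring_1"
  shows "(\<Prod>k<n. (1 - x ^ (k + 1)) * (1 - x ^ (k + 2)))
      * (\<Prod>k<n. \<Prod>i<k. (1 - x ^ (i + 1)) * (1 - x ^ (i + 2)) * x ^ (k + 1)
                          - (1 - x ^ (k + 1)) * (1 - x ^ (k + 2)) * x ^ (i + 1))
    = (-1) ^ (n * (n - 1) div 2) * x ^ (n * (n\<^sup>2 - 1) div 6)
      * (\<Prod>k = 1..n. (1 - x ^ (2 * k - 1)) ^ (n + 1 - k) * (1 - x ^ (2 * k)) ^ (n + 1 - k))"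
    (is "?U * ?D = _")
proof -
  define P where "P i k = (1 - x ^ (k - i)) * (1 - x ^ (i + k + 3))" for i k
  define g where "g j = (1 - x ^ (2 * j + 1)) * (1 - x ^ (2 * j + 2))" for j
  have "?D = (\<Prod>k<n. \<Prod>i<k. - (x ^ (i + 1))) * (\<Prod>k<n. \<Prod>i<k. P i k)"
    unfolding prod.distrib[symmetric]
    by (intro prod.cong refl) (auto simp: P_def dest: one_minus_power_cross_diff[of _ _ x])
  then have "?U * ?D = (\<Prod>k<n. \<Prod>i<k. - (x ^ (i + 1)))
      * (\<Prod>k<n. (1 - x ^ (k + 1)) * (1 - x ^ (k + 2)) * (\<Prod>i<k. P i k))"
    by (simp only: prod.distrib mult_ac)
  also have "(\<Prod>k<n. (1 - x ^ (k + 1)) * (1 - x ^ (k + 2)) * (\<Prod>i<k. P i k)) = (\<Prod>k<n. \<Prod>j\<le>k. g j)"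
    using prod_one_minus_power_column[of x] prod_one_minus_power_pairs[of x]
    by (intro prod.cong refl) (simp add: P_def g_def lessThan_Suc_atMost[symmetric])
  also have "\<dots> = (\<Prod>k = 1..n. (1 - x ^ (2 * k - 1)) ^ (n + 1 - k) * (1 - x ^ (2 * k)) ^ (n + 1 - k))"
    unfolding prod_triangle_power by (simp add: prod.atLeast1_atMost_eq g_def power_mult_distrib)
  finally show ?thesis
    unfolding prod_minus_power_triangle .
qed

theorem lemma2p8:
  fixes n :: nat and x :: "int poly"
  assumes "n \<ge> 1"
    and "x = [:0, 1:]"
  shows "det (mat n n (\<lambda>(i, j). (1 - x ^ (i + 1)) ^ (n - j) * (1 - x ^ (i + 2)) ^ (n - j)
                                  * x ^ ((i + 1) * j)))
         = (-1) ^ (n * (n - 1) div 2) * x ^ (n * (n\<^sup>2 - 1) div 6)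
           * (\<Prod>k = 1..n. (1 - x ^ (2 * k - 1)) ^ (n + 1 - k) * (1 - x ^ (2 * k)) ^ (n + 1 - k))"
proof -
  have "x \<noteq> 0"
    using assms(2) by simp
  have "mat n n (\<lambda>(i, j). (1 - x ^ (i + 1)) ^ (n - j) * (1 - x ^ (i + 2)) ^ (n - j) * x ^ ((i + 1) * j))
      = mat n n (\<lambda>(i, j). ((1 - x ^ (i + 1)) * (1 - x ^ (i + 2))) ^ (n - j) * (x ^ (i + 1)) ^ j)"
    unfolding power_mult power_mult_distrib ..
  then show ?thesis
    using det_scaled_hvandermonde[of n "\<lambda>i. x ^ (i + 1)" "\<lambda>i. (1 - x ^ (i + 1)) * (1 - x ^ (i + 2))"]
      prod_cross_diff_one_minus_power[of x n] \<open>x \<noteq> 0\<close>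
    by simp
qed

end
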